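(* Let $Y$ be an isotropic $\alpha$-stable process in $\mathbb{R}^d$, $\alpha\in(0,2]$, let $\Omega\subset\mathbb{R}^d$ be a bounded open set, and let $\{(\lambda^Y_n,\psi^Y_n)\}_{n\ge1}$ be the eigenpairs of the killed process $Y^\Omega$. Let $D$ be a subordinator with infinite Lévy measure and Laplace exponent $\phi$, independent of $Y$. Then \[ \ln Q^{Y\circ D}_\Omega(t)\sim -t\,\phi(\lambda^Y_1)\quad\text{as }t\to\infty. \]
   Context: $Y$ is a Lévy process with càdlàg paths and $\mathbb{E}[e^{i\langle\xi,Y_t\rangle}]=e^{-t|\xi|^\alpha}$; $\mathbb{P}_x$ is its law started at $x$. $\tau_\Omega^Y=\inf\{t>0:Y_t\notin\Omega\}$; the killed process $Y^\Omega$ has transition density $p^{Y,\Omega}(t,x,y)=\sum_{n\ge1}e^{-\lambda_n^Yt}\psi_n^Y(x)\psi_n^Y(y)$ with $0<\lambda^Y_1<\lambda^Y_2\le\cdots\to\infty$ the eigenvalues and $\{\psi_n^Y\}$ the $L^2(\Omega)$-orthonormal eigenfunctions. $Q_\Omega^Y(t)=\int_\Omega\mathbb{P}_x(\tau^Y_\Omega>t)dx$. A subordinator $D$ is a nondecreasing càdlàg Lévy process with $D_0=0$, $\mathbb{E}[e^{-\lambda D_t}]=e^{-t\phi(\lambda)}$, $\phi(\lambda)=\int_0^\infty(1-e^{-\lambda x})\nu(dx)$, with Lévy measure $\nu$ satisfying $\int_0^\infty(1\wedge x)\nu(dx)<\infty$ and $\nu(0,\infty)=\infty$. The spectral heat content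 of $Y\circ D$ is $Q^{Y\circ D}_\Omega(t)=\mathbb{E}[Q^Y_\Omega(D_t)]$. $f\sim g$ means $f(t)/g(t)\to1$. *)

theory Defs
  imports "HOL-Probability.Probability" "HOL-Library.Landau_Symbols"
begin

definition cadlag_path :: "(real \<Rightarrow> 'b::topological_space) \<Rightarrow> bool" where
  "cadlag_path f \<longleftrightarrow>
     (\<forall>t\<ge>0. continuous (at_right t) f) \<and> (\<forall>t>0. \<exists>l. (f \<longlongrightarrow> l) (at_left t))"

definition levy_process :: "'a measure \<Rightarrow> (real \<Rightarrow> 'a \<Rightarrow> 'b::euclidean_space) \<Rightarrow> bool" where
  "levy_process M X \<longleftrightarrow>
     prob_space M \<and>
     (\<forall>t. X t \<in> borel_measurable M) \<and>
     (\<forall>\<omega>\<in>space M. X 0 \<omega> = 0) \<and>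
     (\<forall>\<omega>\<in>space M. cadlag_path (\<lambda>s. X s \<omega>)) \<and>
     (\<forall>(n::nat) (t::nat \<Rightarrow> real). 0 \<le> t 0 \<and> (\<forall>i<n. t i < t (Suc i)) \<longrightarrow>
        prob_space.indep_vars M (\<lambda>_. borel) (\<lambda>i \<omega>. X (t (Suc i)) \<omega> - X (t i) \<omega>) {..<n}) \<and>
     (\<forall>s t. 0 \<le> s \<and> s \<le> t \<longrightarrow>
        distr M borel (\<lambda>\<omega>. X t \<omega> - X s \<omega>) = distr M borel (X (t - s)))"

definition isotropic_stable :: "'a measure \<Rightarrow> real \<Rightarrow> (real \<Rightarrow> 'a \<Rightarrow> 'b::euclidean_space) \<Rightarrow> bool" where
  "isotropic_stable M \<alpha> Y \<longleftrightarrow> levy_process M Y \<and>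
     (\<forall>t\<ge>0. \<forall>\<xi>. (\<integral>\<omega>. cis (\<xi> \<bullet> Y t \<omega>) \<partial>M) = complex_of_real (exp (- (t * norm \<xi> powr \<alpha>))))"

definition infinite_levy_measure :: "real measure \<Rightarrow> bool" where
  "infinite_levy_measure \<nu> \<longleftrightarrow> sets \<nu> = sets borel \<and> emeasure \<nu> {..0} = 0 \<and>
     (\<integral>\<^sup>+ x. ennreal (min 1 x) \<partial>\<nu>) < \<infinity> \<and> emeasure \<nu> {0<..} = \<infinity>"

definition laplace_exponent :: "real measure \<Rightarrow> real \<Rightarrow> real" where
  "laplace_exponent \<nu> l = (\<integral>x. (1 - exp (- l * x)) \<partial>\<nu>)"

definition subordinator :: "'a measure \<Rightarrow> (real \<Rightarrow> 'a \<Rightarrow> real) \<Rightarrow> real measure \<Rightarrow> bool" where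
  "subordinator M D \<nu> \<longleftrightarrow> levy_process M D \<and> infinite_levy_measure \<nu> \<and>
     (\<forall>\<omega>\<in>space M. mono_on {0..} (\<lambda>t. D t \<omega>)) \<and>
     (\<forall>l\<ge>0. \<forall>t\<ge>0. (\<integral>\<omega>. exp (- l * D t \<omega>) \<partial>M) = exp (- t * laplace_exponent \<nu> l))"

text \<open>First exit time from \<Omega> of a path f (in the extended reals; Inf of the empty set is infinity).\<close>
definition exit_time :: "'b set \<Rightarrow> (real \<Rightarrow> 'b) \<Rightarrow> ereal" where
  "exit_time \<Omega> f = Inf (ereal ` {t. t > 0 \<and> f t \<notin> \<Omega>})"

text \<open>P_x(tau_\<Omega> > t), where under P_x the process is x + Y.\<close>
definition survival_prob :: "'a measure \<Rightarrow> (real \<Rightarrow> 'a \<Rightarrow> 'b::euclidean_space) \<Rightarrow> 'b set \<Rightarrow> 'b \<Rightarrow> real \<Rightarrow> real" where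
  "survival_prob M Y \<Omega> x t = measure M {\<omega>\<in>space M. ereal t < exit_time \<Omega> (\<lambda>s. x + Y s \<omega>)}"

definition spectral_heat_content :: "'a measure \<Rightarrow> (real \<Rightarrow> 'a \<Rightarrow> 'b::euclidean_space) \<Rightarrow> 'b set \<Rightarrow> real \<Rightarrow> real" where
  "spectral_heat_content M Y \<Omega> t = (\<integral>x\<in>\<Omega>. survival_prob M Y \<Omega> x t \<partial>lborel)"

text \<open>Spectral heat content of the subordinate process: Q^{Y o D}(t) = E[Q^Y(D_t)].\<close>
definition subordinate_heat_content :: "'a measure \<Rightarrow> (real \<Rightarrow> 'a \<Rightarrow> 'b::euclidean_space) \<Rightarrow> (real \<Rightarrow> 'a \<Rightarrow> real) \<Rightarrow> 'b set \<Rightarrow> real \<Rightarrow> real" where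
  "subordinate_heat_content M Y D \<Omega> t = (\<integral>\<omega>. spectral_heat_content M Y \<Omega> (D t \<omega>) \<partial>M)"

definition killed_eigenpairs :: "'a measure \<Rightarrow> (real \<Rightarrow> 'a \<Rightarrow> 'b::euclidean_space) \<Rightarrow> 'b set \<Rightarrow>
    (nat \<Rightarrow> real) \<Rightarrow> (nat \<Rightarrow> 'b \<Rightarrow> real) \<Rightarrow> bool" where
  "killed_eigenpairs M Y \<Omega> lam \<psi> \<longleftrightarrow>
     (\<forall>n\<ge>1. \<psi> n \<in> borel_measurable borel \<and> set_integrable lborel \<Omega> (\<lambda>x. (\<psi> n x)\<^sup>2)) \<and>
     (\<forall>n\<ge>1. \<forall>m\<ge>1. (\<integral>x\<in>\<Omega>. \<psi> n x * \<psi> m x \<partial>lborel) = (if n = m then 1 else 0)) \<and>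
     0 < lam 1 \<and> lam 1 < lam 2 \<and> (\<forall>n\<ge>2. lam n \<le> lam (Suc n)) \<and> filterlim lam at_top sequentially \<and>
     (\<forall>t>0. \<forall>x\<in>\<Omega>. \<forall>y\<in>\<Omega>.
        summable (\<lambda>n. exp (- lam (Suc n) * t) * \<psi> (Suc n) x * \<psi> (Suc n) y)) \<and>
     (\<forall>t>0. \<forall>x\<in>\<Omega>. \<forall>A\<in>sets borel. A \<subseteq> \<Omega> \<longrightarrow>
        measure M {\<omega>\<in>space M. ereal t < exit_time \<Omega> (\<lambda>s. x + Y s \<omega>) \<and> x + Y t \<omega> \<in> A}
        = (\<integral>y\<in>A. (\<Sum>n. exp (- lam (Suc n) * t) * \<psi> (Suc n) x * \<psi> (Suc n) y) \<partial>lborel))"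

definition process_sigma :: "'a measure \<Rightarrow> (real \<Rightarrow> 'a \<Rightarrow> 'b::topological_space) \<Rightarrow> 'a set set" where
  "process_sigma M X = sigma_sets (space M) (\<Union>t. {X t -` A \<inter> space M | A. A \<in> sets borel})"

end

theory Submission
  imports Defs
begin

(* Integrating the eigenfunction expansion of the killed transition density over Omega x Omega gives
   Q^Y(s) = sum_n exp(-lambda_n s) (int_Omega psi_n)^2.  Bessel's inequality for the constant function 1
   bounds this by |Omega| exp(-lambda_1 s), and the first term bounds it from below by
   (int psi_1)^2 exp(-lambda_1 s).  The lower bound is nontrivial because int psi_1 <> 0: the density
   is nonnegative and lambda_1 < lambda_2, and testing the semigroup against |psi_1| forces
   <psi_1, |psi_1|>^2 = 1, so psi_1 has constant sign.  Evaluating at s = D_t and using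
   E exp(-lambda D_t) = exp(-t phi(lambda)) traps Q^{Y o D}(t) between two positive multiples of
   exp(-t phi(lambda_1)); since nu charges (0, infinity), phi(lambda_1) > 0, and taking logarithms
   gives the asymptotics. *)

section \<open>Square-integrable functions and orthonormal systems\<close>

lemma abs_mult_le_sum_squares: "\<bar>a * b\<bar> \<le> a\<^sup>2 + b\<^sup>2" for a b :: real
  using sum_squares_bound[of "\<bar>a\<bar>" "\<bar>b\<bar>"] abs_ge_zero[of "a * b"]
  unfolding abs_mult power2_abs by linarith

lemma integrable_mult_square_integrable:
  fixes f g :: "'b \<Rightarrow> real"
  assumes [measurable]: "f \<in> borel_measurable N" "g \<in> borel_measurable N"
    and "integrable N (\<lambda>x. (f x)\<^sup>2)" "integrable N (\<lambda>x. (g x)\<^sup>2)"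
  shows "integrable N (\<lambda>x. f x * g x)"
  by (rule Bochner_Integration.integrable_bound[OF Bochner_Integration.integrable_add[OF assms(3,4)]])
     (auto intro!: abs_mult_le_sum_squares)

lemma integrable_square_sum:
  fixes f :: "nat \<Rightarrow> 'b \<Rightarrow> real"
  assumes "finite I" and [measurable]: "\<And>i. f i \<in> borel_measurable N"
    and "\<And>i. i \<in> I \<Longrightarrow> integrable N (\<lambda>x. (f i x)\<^sup>2)"
  shows "integrable N (\<lambda>x. (\<Sum>i\<in>I. f i x)\<^sup>2)"
  using assms(1,3)
proof (induction I rule: finite_induct)
  case (insert i I)
  then have "integrable N (\<lambda>x. f i x * (\<Sum>i\<in>I. f i x))"
    by (intro integrable_mult_square_integrable) auto
  with insert have "integrable N (\<lambda>x. (f i x)\<^sup>2 + (\<Sum>i\<in>I. f i x)\<^sup>2 + 2 * (f i x * (\<Sum>i\<in>I. f i x)))"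
    by auto
  with insert show ?case by (simp add: power2_sum mult.assoc)
qed simp

lemma Cauchy_Schwarz_integral:
  fixes f g :: "'b \<Rightarrow> real"
  assumes [measurable]: "f \<in> borel_measurable N" "g \<in> borel_measurable N"
    and f2: "integrable N (\<lambda>x. (f x)\<^sup>2)" and g2: "integrable N (\<lambda>x. (g x)\<^sup>2)"
  shows "\<bar>\<integral>x. f x * g x \<partial>N\<bar> \<le> sqrt ((\<integral>x. (f x)\<^sup>2 \<partial>N) * (\<integral>x. (g x)\<^sup>2 \<partial>N))"
proof -
  have "integrable N (\<lambda>x. \<bar>f x\<bar> * \<bar>g x\<bar>)"
    using integrable_mult_square_integrable[OF assms] by (simp add: abs_mult[symmetric])
  then have "(\<integral>\<^sup>+x. ennreal \<bar>f x\<bar> * ennreal \<bar>g x\<bar> \<partial>N) = ennreal (\<integral>x. \<bar>f x\<bar> * \<bar>g x\<bar> \<partial>N)"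
    by (subst nn_integral_eq_integral[symmetric]) (auto simp: ennreal_mult)
  then have "ennreal ((\<integral>x. \<bar>f x\<bar> * \<bar>g x\<bar> \<partial>N)\<^sup>2)
      = (\<integral>\<^sup>+x. ennreal \<bar>f x\<bar> * ennreal \<bar>g x\<bar> \<partial>N)\<^sup>2"
    by (simp add: ennreal_power)
  also have "\<dots> \<le> (\<integral>\<^sup>+x. ennreal \<bar>f x\<bar> ^ 2 \<partial>N) * (\<integral>\<^sup>+x. ennreal \<bar>g x\<bar> ^ 2 \<partial>N)"
    by (rule Cauchy_Schwarz_nn_integral) auto
  also have "\<dots> = ennreal ((\<integral>x. (f x)\<^sup>2 \<partial>N) * (\<integral>x. (g x)\<^sup>2 \<partial>N))"
  proof -
    have "(\<integral>\<^sup>+x. ennreal \<bar>h x\<bar> ^ 2 \<partial>N) = ennreal (\<integral>x. (h x)\<^sup>2 \<partial>N)"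
      if "integrable N (\<lambda>x. (h x)\<^sup>2)" for h :: "'b \<Rightarrow> real"
      using that by (subst nn_integral_eq_integral[symmetric]) (auto simp: ennreal_power)
    moreover have "0 \<le> (\<integral>x. (f x)\<^sup>2 \<partial>N)" "0 \<le> (\<integral>x. (g x)\<^sup>2 \<partial>N)" by simp_all
    ultimately show ?thesis using f2 g2 by (simp add: ennreal_mult)
  qed
  finally have "(\<integral>x. \<bar>f x\<bar> * \<bar>g x\<bar> \<partial>N)\<^sup>2 \<le> (\<integral>x. (f x)\<^sup>2 \<partial>N) * (\<integral>x. (g x)\<^sup>2 \<partial>N)"
    by (simp add: ennreal_le_iff)
  then have "(\<integral>x. \<bar>f x\<bar> * \<bar>g x\<bar> \<partial>N) \<le> sqrt ((\<integral>x. (f x)\<^sup>2 \<partial>N) * (\<integral>x. (g x)\<^sup>2 \<partial>N))"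
    by (rule real_le_rsqrt)
  moreover have "\<bar>\<integral>x. f x * g x \<partial>N\<bar> \<le> (\<integral>x. \<bar>f x\<bar> * \<bar>g x\<bar> \<partial>N)"
    using integral_abs_bound[of N "\<lambda>x. f x * g x"] by (simp add: abs_mult)
  ultimately show ?thesis by linarith
qed

locale orthonormal_system =
  fixes N :: "'b measure" and e :: "nat \<Rightarrow> 'b \<Rightarrow> real"
  assumes measurable_e [measurable]: "\<And>n. e n \<in> borel_measurable N"
    and square_integrable_e: "\<And>n. integrable N (\<lambda>x. (e n x)\<^sup>2)"
    and orthonormal: "\<And>n m. (\<integral>x. e n x * e m x \<partial>N) = (if n = m then 1 else 0)"
begin

lemma integrable_e_mult:
  "g \<in> borel_measurable N \<Longrightarrow> integrable N (\<lambda>x. (g x)\<^sup>2) \<Longrightarrow> integrable N (\<lambda>x. e n x * g x)"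
  by (rule integrable_mult_square_integrable) (auto intro: square_integrable_e)

lemma integrable_finite_expansion_mult:
  assumes "g \<in> borel_measurable N" and "integrable N (\<lambda>x. (g x)\<^sup>2)"
  shows "integrable N (\<lambda>x. (\<Sum>n\<in>I. d n * e n x) * g x)"
  using assms unfolding sum_distrib_right
  by (auto simp: mult.assoc intro!: integrable_mult_right integrable_e_mult)

lemma integral_finite_expansion_mult:
  assumes "g \<in> borel_measurable N" and "integrable N (\<lambda>x. (g x)\<^sup>2)"
  shows "(\<integral>x. (\<Sum>n\<in>I. d n * e n x) * g x \<partial>N) = (\<Sum>n\<in>I. d n * (\<integral>x. e n x * g x \<partial>N))"
  using assms unfolding sum_distrib_right
  by (subst Bochner_Integration.integral_sum) (auto simp: mult.assoc intro!: integrable_mult_right integrable_e_mult)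

lemma square_integrable_finite_expansion:
  "finite I \<Longrightarrow> integrable N (\<lambda>x. (\<Sum>n\<in>I. d n * e n x)\<^sup>2)"
  by (rule integrable_square_sum) (auto simp: power_mult_distrib intro!: square_integrable_e)

lemma integral_square_finite_expansion:
  assumes "finite I"
  shows "(\<integral>x. (\<Sum>n\<in>I. d n * e n x)\<^sup>2 \<partial>N) = (\<Sum>n\<in>I. (d n)\<^sup>2)"
proof -
  let ?S = "\<lambda>x. \<Sum>n\<in>I. d n * e n x"
  have coeff: "(\<integral>x. e m x * ?S x \<partial>N) = d m" if "m \<in> I" for m
  proof -
    have "(\<integral>x. e m x * ?S x \<partial>N) = (\<integral>x. ?S x * e m x \<partial>N)" by (simp add: mult.commute)
    also have "\<dots> = (\<Sum>n\<in>I. d n * (if n = m then 1 else 0))"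
      by (simp add: integral_finite_expansion_mult square_integrable_e orthonormal)
    also have "\<dots> = d m" using that assms by (simp add: if_distrib sum.delta' cong: if_cong)
    finally show ?thesis .
  qed
  have "(\<integral>x. (?S x)\<^sup>2 \<partial>N) = (\<integral>x. ?S x * ?S x \<partial>N)" by (simp add: power2_eq_square)
  also have "\<dots> = (\<Sum>n\<in>I. d n * d n)"
    using assms by (simp add: integral_finite_expansion_mult square_integrable_finite_expansion coeff)
  finally show ?thesis by (simp add: power2_eq_square)
qed

lemma bessel_inequality_finite:
  assumes [measurable]: "g \<in> borel_measurable N" and g2: "integrable N (\<lambda>x. (g x)\<^sup>2)"
    and "finite I"
  shows "(\<Sum>n\<in>I. (\<integral>x. e n x * g x \<partial>N)\<^sup>2) \<le> (\<integral>x. (g x)\<^sup>2 \<partial>N)"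
proof -
  define b where "b n = (\<integral>x. e n x * g x \<partial>N)" for n
  let ?S = "\<lambda>x. \<Sum>n\<in>I. b n * e n x"
  have "0 \<le> (\<integral>x. (g x - ?S x)\<^sup>2 \<partial>N)" by simp
  also have "\<dots> = (\<integral>x. (g x)\<^sup>2 - 2 * (?S x * g x) + (?S x)\<^sup>2 \<partial>N)"
    by (simp add: power2_diff algebra_simps)
  also have "\<dots> = (\<integral>x. (g x)\<^sup>2 \<partial>N) - 2 * (\<integral>x. ?S x * g x \<partial>N) + (\<integral>x. (?S x)\<^sup>2 \<partial>N)"
    using g2 \<open>finite I\<close>
    by (simp add: integrable_finite_expansion_mult square_integrable_finite_expansion)
  also have "(\<integral>x. ?S x * g x \<partial>N) = (\<Sum>n\<in>I. (b n)\<^sup>2)"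
    using g2 by (simp add: integral_finite_expansion_mult b_def power2_eq_square)
  also have "(\<integral>x. (?S x)\<^sup>2 \<partial>N) = (\<Sum>n\<in>I. (b n)\<^sup>2)"
    using \<open>finite I\<close> by (rule integral_square_finite_expansion)
  finally show ?thesis unfolding b_def by simp
qed

lemma bessel_inequality:
  assumes "g \<in> borel_measurable N" and "integrable N (\<lambda>x. (g x)\<^sup>2)"
  shows "summable (\<lambda>n. (\<integral>x. e n x * g x \<partial>N)\<^sup>2)"
    and "(\<Sum>n. (\<integral>x. e n x * g x \<partial>N)\<^sup>2) \<le> (\<integral>x. (g x)\<^sup>2 \<partial>N)"
proof -
  have partial: "(\<Sum>n<K. (\<integral>x. e n x * g x \<partial>N)\<^sup>2) \<le> (\<integral>x. (g x)\<^sup>2 \<partial>N)" for K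
    using assms by (simp add: bessel_inequality_finite)
  show "summable (\<lambda>n. (\<integral>x. e n x * g x \<partial>N)\<^sup>2)"
    by (rule summableI_nonneg_bounded[OF _ partial]) simp
  then show "(\<Sum>n. (\<integral>x. e n x * g x \<partial>N)\<^sup>2) \<le> (\<integral>x. (g x)\<^sup>2 \<partial>N)"
    by (rule suminf_le_const[OF _ partial])
qed

lemma nn_integral_expansion_remainder_le:
  assumes ds: "summable (\<lambda>n. (d n)\<^sup>2)"
    and Fs: "\<And>x. x \<in> space N \<Longrightarrow> (\<lambda>n. d n * e n x) sums F x"
  shows "(\<integral>\<^sup>+x. ennreal ((F x - (\<Sum>n<M. d n * e n x))\<^sup>2) \<partial>N) \<le> ennreal (\<Sum>n. (d (n + M))\<^sup>2)"
proof -
  let ?S = "\<lambda>K x. \<Sum>n<K. d n * e n x"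
  have tail: "(\<Sum>n. (d (n + M))\<^sup>2) = (\<Sum>n. (d n)\<^sup>2) - (\<Sum>n<M. (d n)\<^sup>2)"
    using suminf_split_initial_segment[OF ds, of M] by simp
  have partial: "(\<integral>\<^sup>+x. ennreal ((?S K x - ?S M x)\<^sup>2) \<partial>N) \<le> ennreal (\<Sum>n. (d (n + M))\<^sup>2)"
    if "M \<le> K" for K
  proof -
    have "?S K x - ?S M x = (\<Sum>n\<in>{M..<K}. d n * e n x)" for x
      using sum_diff_nat_ivl[of 0 M K "\<lambda>n. d n * e n x"] that by (simp add: atLeast0LessThan)
    then have "(\<integral>\<^sup>+x. ennreal ((?S K x - ?S M x)\<^sup>2) \<partial>N) = ennreal (\<Sum>n\<in>{M..<K}. (d n)\<^sup>2)"
      by (simp add: nn_integral_eq_integral square_integrable_finite_expansion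
          integral_square_finite_expansion)
    also have "(\<Sum>n\<in>{M..<K}. (d n)\<^sup>2) = (\<Sum>n<K. (d n)\<^sup>2) - (\<Sum>n<M. (d n)\<^sup>2)"
      using sum_diff_nat_ivl[of 0 M K "\<lambda>n. (d n)\<^sup>2"] that by (simp add: atLeast0LessThan)
    also have "\<dots> \<le> (\<Sum>n. (d (n + M))\<^sup>2)"
      unfolding tail using sum_le_suminf[OF ds, of "{..<K}"] by simp
    finally show ?thesis by (simp add: ennreal_leI)
  qed
  have "(\<integral>\<^sup>+x. ennreal ((F x - ?S M x)\<^sup>2) \<partial>N)
      = (\<integral>\<^sup>+x. liminf (\<lambda>K. ennreal ((?S K x - ?S M x)\<^sup>2)) \<partial>N)"
  proof (rule nn_integral_cong)
    fix x assume "x \<in> space N"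
    then have "(\<lambda>K. ennreal ((?S K x - ?S M x)\<^sup>2)) \<longlonglongrightarrow> ennreal ((F x - ?S M x)\<^sup>2)"
      using Fs unfolding sums_def by (intro tendsto_intros)
    then show "ennreal ((F x - ?S M x)\<^sup>2) = liminf (\<lambda>K. ennreal ((?S K x - ?S M x)\<^sup>2))"
      by (rule lim_imp_Liminf[symmetric, rotated]) simp
  qed
  also have "\<dots> \<le> liminf (\<lambda>K. (\<integral>\<^sup>+x. ennreal ((?S K x - ?S M x)\<^sup>2) \<partial>N))"
    by (rule nn_integral_liminf) measurable
  also have "\<dots> \<le> limsup (\<lambda>K. (\<integral>\<^sup>+x. ennreal ((?S K x - ?S M x)\<^sup>2) \<partial>N))"
    by (rule Liminf_le_Limsup) simp
  also have "\<dots> \<le> ennreal (\<Sum>n. (d (n + M))\<^sup>2)"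
    by (rule Limsup_bounded) (auto intro!: partial simp: eventually_sequentially)
  finally show ?thesis .
qed

lemma measurable_expansion:
  assumes "\<And>x. x \<in> space N \<Longrightarrow> (\<lambda>n. d n * e n x) sums F x"
  shows "F \<in> borel_measurable N"
  by (rule borel_measurable_LIMSEQ_metric[of "\<lambda>K x. \<Sum>n<K. d n * e n x"])
     (use assms in \<open>auto simp: sums_def\<close>)

lemma integral_expansion_remainder_le:
  assumes ds: "summable (\<lambda>n. (d n)\<^sup>2)"
    and Fs: "\<And>x. x \<in> space N \<Longrightarrow> (\<lambda>n. d n * e n x) sums F x"
  shows "integrable N (\<lambda>x. (F x - (\<Sum>n<M. d n * e n x))\<^sup>2)"
    and "(\<integral>x. (F x - (\<Sum>n<M. d n * e n x))\<^sup>2 \<partial>N) \<le> (\<Sum>n. (d (n + M))\<^sup>2)"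
proof -
  note bound = nn_integral_expansion_remainder_le[OF ds Fs, of M]
  have [measurable]: "F \<in> borel_measurable N" by (rule measurable_expansion[OF Fs])
  show int: "integrable N (\<lambda>x. (F x - (\<Sum>n<M. d n * e n x))\<^sup>2)"
    using bound by (intro integrableI_bounded) (auto simp: order_le_less_trans)
  have "ennreal (\<integral>x. (F x - (\<Sum>n<M. d n * e n x))\<^sup>2 \<partial>N) \<le> ennreal (\<Sum>n. (d (n + M))\<^sup>2)"
    using bound int by (subst nn_integral_eq_integral[symmetric]) auto
  moreover have "0 \<le> (\<Sum>n. (d (n + M))\<^sup>2)"
    using summable_ignore_initial_segment[OF ds, of M] by (intro suminf_nonneg) auto
  ultimately show "(\<integral>x. (F x - (\<Sum>n<M. d n * e n x))\<^sup>2 \<partial>N) \<le> (\<Sum>n. (d (n + M))\<^sup>2)"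
    by simp
qed

lemma square_integrable_expansion:
  assumes "summable (\<lambda>n. (d n)\<^sup>2)" and "\<And>x. x \<in> space N \<Longrightarrow> (\<lambda>n. d n * e n x) sums F x"
  shows "integrable N (\<lambda>x. (F x)\<^sup>2)"
  using integral_expansion_remainder_le(1)[OF assms, of 0] by simp

lemma expansion_inner_sums:
  assumes ds: "summable (\<lambda>n. (d n)\<^sup>2)"
    and Fs: "\<And>x. x \<in> space N \<Longrightarrow> (\<lambda>n. d n * e n x) sums F x"
    and [measurable]: "g \<in> borel_measurable N" and g2: "integrable N (\<lambda>x. (g x)\<^sup>2)"
  shows "(\<lambda>n. d n * (\<integral>x. e n x * g x \<partial>N)) sums (\<integral>x. F x * g x \<partial>N)"
proof -
  let ?S = "\<lambda>M x. \<Sum>n<M. d n * e n x"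
  let ?G = "\<integral>x. (g x)\<^sup>2 \<partial>N"
  have [measurable]: "F \<in> borel_measurable N" by (rule measurable_expansion[OF Fs])
  have F2: "integrable N (\<lambda>x. (F x)\<^sup>2)" by (rule square_integrable_expansion[OF ds Fs])
  have err: "\<bar>(\<Sum>n<M. d n * (\<integral>x. e n x * g x \<partial>N)) - (\<integral>x. F x * g x \<partial>N)\<bar>
      \<le> sqrt ((\<Sum>n. (d (n + M))\<^sup>2) * ?G)" for M
  proof -
    have "integrable N (\<lambda>x. ?S M x * g x)"
      using g2 by (rule integrable_finite_expansion_mult[rotated]) simp
    moreover have "integrable N (\<lambda>x. F x * g x)"
      using F2 g2 by (intro integrable_mult_square_integrable) auto
    moreover have "(\<Sum>n<M. d n * (\<integral>x. e n x * g x \<partial>N)) = (\<integral>x. ?S M x * g x \<partial>N)"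
      using g2 by (intro integral_finite_expansion_mult[symmetric]) auto
    ultimately have "(\<Sum>n<M. d n * (\<integral>x. e n x * g x \<partial>N)) - (\<integral>x. F x * g x \<partial>N)
        = - (\<integral>x. (F x - ?S M x) * g x \<partial>N)"
      by (simp add: left_diff_distrib)
    then have "\<bar>(\<Sum>n<M. d n * (\<integral>x. e n x * g x \<partial>N)) - (\<integral>x. F x * g x \<partial>N)\<bar>
        = \<bar>\<integral>x. (F x - ?S M x) * g x \<partial>N\<bar>" by simp
    also have "\<dots> \<le> sqrt ((\<integral>x. (F x - ?S M x)\<^sup>2 \<partial>N) * ?G)"
      by (rule Cauchy_Schwarz_integral) (auto intro: integral_expansion_remainder_le(1)[OF ds Fs] g2)
    also have "\<dots> \<le> sqrt ((\<Sum>n. (d (n + M))\<^sup>2) * ?G)"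
      using integral_expansion_remainder_le(2)[OF ds Fs, of M]
      by (intro real_sqrt_le_mono mult_right_mono) auto
    finally show ?thesis .
  qed
  have "(\<lambda>M. \<Sum>n. (d (n + M))\<^sup>2) \<longlonglongrightarrow> 0"
    using suminf_exist_split2[OF ds] by simp
  then have "(\<lambda>M. sqrt ((\<Sum>n. (d (n + M))\<^sup>2) * ?G)) \<longlonglongrightarrow> 0"
    using tendsto_real_sqrt[OF tendsto_mult_right[of _ 0 sequentially ?G]] by simp
  then have "(\<lambda>M. (\<Sum>n<M. d n * (\<integral>x. e n x * g x \<partial>N)) - (\<integral>x. F x * g x \<partial>N)) \<longlonglongrightarrow> 0"
    by (rule Lim_null_comparison[rotated]) (simp add: err)
  then show ?thesis unfolding sums_def by (rule LIM_zero_cancel)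
qed

lemma expansion_coefficient:
  assumes "summable (\<lambda>n. (d n)\<^sup>2)" and "\<And>x. x \<in> space N \<Longrightarrow> (\<lambda>n. d n * e n x) sums F x"
  shows "(\<integral>x. F x * e m x \<partial>N) = d m"
proof -
  have "(\<lambda>n. d n * (\<integral>x. e n x * e m x \<partial>N)) sums (\<integral>x. F x * e m x \<partial>N)"
    using assms by (rule expansion_inner_sums) (auto intro: square_integrable_e)
  moreover have "(\<lambda>n. d n * (\<integral>x. e n x * e m x \<partial>N)) sums d m"
    using sums_single[of m "\<lambda>_. d m"] by (simp add: orthonormal if_distrib cong: if_cong)
  ultimately show ?thesis by (rule sums_unique2)
qed

end

section \<open>Nonnegative kernels with a spectral gap\<close>

lemma integral_nonzero_if_inner_abs_ge_one:
  fixes f :: "'b \<Rightarrow> real"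
  assumes "finite_measure N" and [measurable]: "f \<in> borel_measurable N"
    and f2: "integrable N (\<lambda>x. (f x)\<^sup>2)" and norm1: "(\<integral>x. (f x)\<^sup>2 \<partial>N) = 1"
    and "1 \<le> (\<integral>x. f x * \<bar>f x\<bar> \<partial>N)"
  shows "(\<integral>x. f x \<partial>N) \<noteq> 0"
proof
  assume mean0: "(\<integral>x. f x \<partial>N) = 0"
  have "integrable N (\<lambda>x. f x * \<bar>f x\<bar>)"
    using f2 by (intro integrable_mult_square_integrable) auto
  then have int: "integrable N (\<lambda>x. (f x)\<^sup>2 - f x * \<bar>f x\<bar>)" using f2 by auto
  have gap_nonneg: "0 \<le> (f x)\<^sup>2 - f x * \<bar>f x\<bar>" for x
    by (cases "0 \<le> f x") (auto simp: power2_eq_square)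
  have "(\<integral>x. (f x)\<^sup>2 - f x * \<bar>f x\<bar> \<partial>N) \<le> 0"
    using f2 norm1 \<open>integrable N (\<lambda>x. f x * \<bar>f x\<bar>)\<close> \<open>1 \<le> (\<integral>x. f x * \<bar>f x\<bar> \<partial>N)\<close> by simp
  then have "(\<integral>x. (f x)\<^sup>2 - f x * \<bar>f x\<bar> \<partial>N) = 0"
    using gap_nonneg by (intro order_antisym integral_nonneg) auto
  then have "AE x in N. (f x)\<^sup>2 - f x * \<bar>f x\<bar> = 0"
    using integral_nonneg_eq_0_iff_AE[OF int] gap_nonneg by simp
  moreover have "0 \<le> f x" if "(f x)\<^sup>2 - f x * \<bar>f x\<bar> = 0" for x
    using that by (cases "f x < 0") (simp_all add: power2_eq_square)
  ultimately have nonneg: "AE x in N. 0 \<le> f x"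
    by (auto elim: eventually_mono)
  have "integrable N f"
    by (rule finite_measure.square_integrable_imp_integrable[OF \<open>finite_measure N\<close> _ f2]) simp
  then have "AE x in N. f x = 0"
    using integral_nonneg_eq_0_iff_AE[OF _ nonneg] mean0 by simp
  then have "AE x in N. (f x)\<^sup>2 = 0" by eventually_elim simp
  then have "(\<integral>x. (f x)\<^sup>2 \<partial>N) = (\<integral>x. 0 \<partial>N)" by (intro integral_cong_AE) simp_all
  with norm1 show False by simp
qed

(* The Perron-Frobenius situation: the top eigenfunction e 0 of such a kernel has constant sign. *)
locale positive_kernel = orthonormal_system N e for N :: "'b measure" and e +
  fixes w :: "nat \<Rightarrow> real" and K :: "'b \<Rightarrow> 'b \<Rightarrow> real"
  assumes weights_nonneg: "\<And>n. 0 \<le> w n"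
    and spectral_gap: "w 1 < w 0" "\<And>n. 1 \<le> n \<Longrightarrow> w n \<le> w 1"
    and kernel_square_summable: "\<And>x. x \<in> space N \<Longrightarrow> summable (\<lambda>n. (w n * e n x)\<^sup>2)"
    and kernel_expansion:
      "\<And>x y. x \<in> space N \<Longrightarrow> y \<in> space N \<Longrightarrow> (\<lambda>n. w n * e n x * e n y) sums K x y"
    and kernel_nonneg: "\<And>x. x \<in> space N \<Longrightarrow> AE y in N. 0 \<le> K x y"
begin

lemma weights_le_top: "w n \<le> w 0"
proof (cases "n = 0")
  case False
  then have "w n \<le> w 1" using spectral_gap(2)[of n] by simp
  with spectral_gap(1) show ?thesis by simp
qed simp

lemma measurable_kernel: "x \<in> space N \<Longrightarrow> K x \<in> borel_measurable N"
  by (rule measurable_expansion[OF kernel_expansion])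

lemma kernel_eigenfunction: "x \<in> space N \<Longrightarrow> (\<integral>y. K x y * e m y \<partial>N) = w m * e m x"
  by (rule expansion_coefficient[OF kernel_square_summable kernel_expansion])

lemma ground_state_abs_le_kernel:
  assumes x: "x \<in> space N"
  shows "w 0 * \<bar>e 0 x\<bar> \<le> (\<integral>y. K x y * \<bar>e 0 y\<bar> \<partial>N)"
proof -
  have [measurable]: "K x \<in> borel_measurable N" by (rule measurable_kernel[OF x])
  have "w 0 * \<bar>e 0 x\<bar> = \<bar>\<integral>y. K x y * e 0 y \<partial>N\<bar>"
    using x weights_nonneg[of 0] by (simp add: kernel_eigenfunction abs_mult)
  also have "\<dots> \<le> (\<integral>y. \<bar>K x y * e 0 y\<bar> \<partial>N)" by (rule integral_abs_bound)
  also have "\<dots> = (\<integral>y. K x y * \<bar>e 0 y\<bar> \<partial>N)"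
    using kernel_nonneg[OF x] by (intro integral_cong_AE) (auto simp: abs_mult)
  finally show ?thesis .
qed

lemma kernel_transform_coefficients_summable:
  assumes "f \<in> borel_measurable N" and "integrable N (\<lambda>x. (f x)\<^sup>2)"
  shows "summable (\<lambda>n. (w n * (\<integral>x. e n x * f x \<partial>N))\<^sup>2)"
proof -
  have "summable (\<lambda>n. (w 0)\<^sup>2 * (\<integral>x. e n x * f x \<partial>N)\<^sup>2)"
    by (intro summable_mult bessel_inequality(1) assms)
  then show ?thesis
    by (rule summable_comparison_test'[where N = 0])
       (simp add: power_mult_distrib mult_right_mono power_mono weights_nonneg weights_le_top)
qed

lemma kernel_transform_expansion:
  assumes "f \<in> borel_measurable N" and "integrable N (\<lambda>x. (f x)\<^sup>2)" and "x \<in> space N"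
  shows "(\<lambda>n. (w n * (\<integral>x. e n x * f x \<partial>N)) * e n x) sums (\<integral>y. K x y * f y \<partial>N)"
  using expansion_inner_sums[OF kernel_square_summable kernel_expansion assms(1,2), OF assms(3) assms(3)]
  by (simp add: ac_simps)

lemma integrable_kernel_transform_mult:
  assumes [measurable]: "f \<in> borel_measurable N" and "integrable N (\<lambda>x. (f x)\<^sup>2)"
  shows "integrable N (\<lambda>x. (\<integral>y. K x y * f y \<partial>N) * f x)"
proof (rule integrable_mult_square_integrable)
  note expansion = kernel_transform_coefficients_summable[OF assms] kernel_transform_expansion[OF assms]
  show "(\<lambda>x. \<integral>y. K x y * f y \<partial>N) \<in> borel_measurable N"
    by (rule measurable_expansion[OF expansion(2)])
  show "integrable N (\<lambda>x. (\<integral>y. K x y * f y \<partial>N)\<^sup>2)"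
    by (rule square_integrable_expansion[OF expansion])
qed (use assms in auto)

lemma kernel_quadratic_form_sums:
  assumes "f \<in> borel_measurable N" and "integrable N (\<lambda>x. (f x)\<^sup>2)"
  shows "(\<lambda>n. w n * (\<integral>x. e n x * f x \<partial>N)\<^sup>2) sums (\<integral>x. (\<integral>y. K x y * f y \<partial>N) * f x \<partial>N)"
  using expansion_inner_sums[OF kernel_transform_coefficients_summable[OF assms]
      kernel_transform_expansion[OF assms] assms]
  by (simp add: power2_eq_square ac_simps)

(* Test the quadratic form of K on |e 0|: positivity of K bounds it below by w 0, the spectral gap
   bounds it above by w 1 + (w 0 - w 1) <e 0, |e 0|>^2. *)
lemma ground_state_inner_abs_square_ge_one: "1 \<le> (\<integral>x. e 0 x * \<bar>e 0 x\<bar> \<partial>N)\<^sup>2"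
proof -
  define f where "f x = \<bar>e 0 x\<bar>" for x
  define b where "b n = (\<integral>x. e n x * f x \<partial>N)" for n
  let ?G = "\<lambda>x. \<integral>y. K x y * f y \<partial>N"
  have [measurable]: "f \<in> borel_measurable N" unfolding f_def by measurable
  have f2: "integrable N (\<lambda>x. (f x)\<^sup>2)" using square_integrable_e[of 0] by (simp add: f_def)
  have norm_f: "(\<integral>x. (f x)\<^sup>2 \<partial>N) = 1" using orthonormal[of 0 0] by (simp add: f_def power2_eq_square)
  have "w 0 = (\<integral>x. w 0 * f x * f x \<partial>N)" using norm_f by (simp add: power2_eq_square mult.assoc)
  also have "\<dots> \<le> (\<integral>x. ?G x * f x \<partial>N)"
  proof (rule integral_mono)
    show "integrable N (\<lambda>x. w 0 * f x * f x)" using f2 by (simp add: power2_eq_square mult.assoc)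
    show "integrable N (\<lambda>x. ?G x * f x)" by (rule integrable_kernel_transform_mult[OF _ f2]) simp
    show "w 0 * f x * f x \<le> ?G x * f x" if "x \<in> space N" for x
      using ground_state_abs_le_kernel[OF that] by (intro mult_right_mono) (auto simp: f_def)
  qed
  also have "\<dots> \<le> w 1 * (\<Sum>n. (b n)\<^sup>2) + (w 0 - w 1) * (b 0)\<^sup>2"
  proof (rule sums_le[OF _ kernel_quadratic_form_sums[OF _ f2, folded b_def, simplified]])
    have "summable (\<lambda>n. (b n)\<^sup>2)" unfolding b_def by (rule bessel_inequality(1)[OF _ f2]) simp
    then show "(\<lambda>n. w 1 * (b n)\<^sup>2 + (if n = 0 then (w 0 - w 1) * (b 0)\<^sup>2 else 0))
        sums (w 1 * (\<Sum>n. (b n)\<^sup>2) + (w 0 - w 1) * (b 0)\<^sup>2)"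
      by (intro sums_add sums_mult summable_sums sums_single)
    show "w n * (b n)\<^sup>2 \<le> w 1 * (b n)\<^sup>2 + (if n = 0 then (w 0 - w 1) * (b 0)\<^sup>2 else 0)" for n
      using spectral_gap(2)[of n] by (cases "n = 0") (auto simp: algebra_simps intro: mult_right_mono)
  qed
  also have "\<dots> \<le> w 1 + (w 0 - w 1) * (b 0)\<^sup>2"
    using bessel_inequality(2)[OF _ f2] weights_nonneg[of 1] norm_f
    by (simp add: b_def mult_left_le)
  finally have "(w 0 - w 1) * 1 \<le> (w 0 - w 1) * (b 0)\<^sup>2" by (simp add: algebra_simps)
  then show ?thesis using spectral_gap(1) by (simp add: b_def f_def)
qed

lemma ground_state_integral_nonzero:
  assumes "finite_measure N"
  shows "(\<integral>x. e 0 x \<partial>N) \<noteq> 0"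
proof (cases "0 \<le> (\<integral>x. e 0 x * \<bar>e 0 x\<bar> \<partial>N)")
  case True
  then have "1 \<le> (\<integral>x. e 0 x * \<bar>e 0 x\<bar> \<partial>N)"
    using ground_state_inner_abs_square_ge_one power2_le_imp_le[of 1] by simp
  then show ?thesis
    using assms square_integrable_e orthonormal[of 0 0]
    by (intro integral_nonzero_if_inner_abs_ge_one) (auto simp: power2_eq_square)
next
  case False
  then have "1 \<le> (\<integral>x. - e 0 x * \<bar>- e 0 x\<bar> \<partial>N)"
    using ground_state_inner_abs_square_ge_one power2_le_imp_le[of 1 "- (\<integral>x. e 0 x * \<bar>e 0 x\<bar> \<partial>N)"]
    by simp
  then have "(\<integral>x. - e 0 x \<partial>N) \<noteq> 0"
    using assms square_integrable_e orthonormal[of 0 0]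
    by (intro integral_nonzero_if_inner_abs_ge_one) (auto simp: power2_eq_square)
  then show ?thesis by simp
qed

end

section \<open>Levy measures, subordinators and exit times\<close>

lemma laplace_integrand_le:
  fixes x l :: real
  assumes "0 < x" "0 \<le> l"
  shows "1 - exp (- l * x) \<le> max 1 l * min 1 x"
proof (cases "x \<le> 1")
  case True
  have "1 - exp (- l * x) \<le> l * x" using exp_ge_add_one_self[of "- l * x"] by simp
  also have "\<dots> \<le> max 1 l * x" using assms by (intro mult_right_mono) auto
  finally show ?thesis using True by simp
next
  case False
  have "1 - exp (- l * x) \<le> 1" by simp
  also have "\<dots> \<le> max 1 l" by simp
  finally show ?thesis using False by simp
qed

lemma infinite_levy_measure_AE_pos:
  assumes "infinite_levy_measure \<nu>"
  shows "AE x in \<nu>. 0 < x"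
proof (rule AE_I')
  show "{..0} \<in> null_sets \<nu>"
    using assms unfolding infinite_levy_measure_def by (auto intro: null_setsI)
qed (auto simp: not_less)

lemma integrable_laplace_integrand:
  assumes \<nu>: "infinite_levy_measure \<nu>" and "0 \<le> l"
  shows "integrable \<nu> (\<lambda>x. 1 - exp (- l * x))"
proof -
  have [measurable_cong]: "sets \<nu> = sets borel" and fin: "(\<integral>\<^sup>+ x. ennreal (min 1 x) \<partial>\<nu>) < \<infinity>"
    using \<nu> unfolding infinite_levy_measure_def by blast+
  have "AE x in \<nu>. ennreal (norm (1 - exp (- l * x))) \<le> ennreal (max 1 l) * ennreal (min 1 x)"
    using infinite_levy_measure_AE_pos[OF \<nu>]
  proof eventually_elim
    case (elim x)
    then show ?case
      using laplace_integrand_le[OF elim \<open>0 \<le> l\<close>] \<open>0 \<le> l\<close>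
      by (simp add: ennreal_mult[symmetric] ennreal_leI)
  qed
  then have "(\<integral>\<^sup>+x. ennreal (norm (1 - exp (- l * x))) \<partial>\<nu>) \<le> (\<integral>\<^sup>+x. ennreal (max 1 l) * ennreal (min 1 x) \<partial>\<nu>)"
    by (rule nn_integral_mono_AE)
  also have "\<dots> = ennreal (max 1 l) * (\<integral>\<^sup>+x. ennreal (min 1 x) \<partial>\<nu>)"
    by (rule nn_integral_cmult) measurable
  also have "\<dots> < \<infinity>" using fin by (simp add: ennreal_mult_less_top)
  finally show ?thesis by (intro integrableI_bounded) auto
qed

lemma laplace_exponent_pos:
  assumes \<nu>: "infinite_levy_measure \<nu>" and "0 < l"
  shows "0 < laplace_exponent \<nu> l"
proof -
  have nonneg: "AE x in \<nu>. 0 \<le> 1 - exp (- l * x)"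
    using infinite_levy_measure_AE_pos[OF \<nu>] by eventually_elim (use \<open>0 < l\<close> in simp)
  have "laplace_exponent \<nu> l \<noteq> 0"
  proof
    assume "laplace_exponent \<nu> l = 0"
    then have "AE x in \<nu>. 1 - exp (- l * x) = 0"
      using integral_nonneg_eq_0_iff_AE[OF integrable_laplace_integrand[OF \<nu>] nonneg] \<open>0 < l\<close>
      unfolding laplace_exponent_def by simp
    then have "AE x in \<nu>. x \<notin> {0<..}"
      using infinite_levy_measure_AE_pos[OF \<nu>] by eventually_elim (use \<open>0 < l\<close> in simp)
    moreover have "sets \<nu> = sets borel" using \<nu> unfolding infinite_levy_measure_def by blast
    ultimately have "emeasure \<nu> {0<..} = 0"
      using sets_eq_imp_space_eq[of \<nu> borel] by (subst AE_iff_measurable[symmetric]) auto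
    then show False using \<nu> unfolding infinite_levy_measure_def by simp
  qed
  moreover have "0 \<le> laplace_exponent \<nu> l"
    unfolding laplace_exponent_def by (rule integral_nonneg_AE[OF nonneg])
  ultimately show ?thesis by simp
qed

lemma levy_processD:
  assumes "levy_process M X"
  shows "prob_space M" and "X t \<in> borel_measurable M"
    and "\<omega> \<in> space M \<Longrightarrow> X 0 \<omega> = 0" and "\<omega> \<in> space M \<Longrightarrow> cadlag_path (\<lambda>s. X s \<omega>)"
  using assms unfolding levy_process_def by blast+

lemma subordinator_nonneg:
  assumes "subordinator M D \<nu>" "0 \<le> t" "\<omega> \<in> space M"
  shows "0 \<le> D t \<omega>"
proof -
  have "levy_process M D" and "mono_on {0..} (\<lambda>t. D t \<omega>)"
    using assms unfolding subordinator_def by blast+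
  moreover from this(1) have "D 0 \<omega> = 0" using assms(3) by (rule levy_processD(3))
  ultimately show ?thesis using mono_onD[of "{0..}" "\<lambda>t. D t \<omega>" 0 t] assms(2) by simp
qed

lemma integrable_comp_subordinator:
  fixes q :: "real \<Rightarrow> real"
  assumes D: "subordinator M D \<nu>" and "0 \<le> t" and [measurable]: "q \<in> borel_measurable borel"
    and bounded: "\<And>s. 0 \<le> s \<Longrightarrow> \<bar>q s\<bar> \<le> B"
  shows "integrable M (\<lambda>\<omega>. q (D t \<omega>))"
proof -
  have "levy_process M D" using D unfolding subordinator_def by blast
  note levy = levy_processD[OF this]
  interpret prob_space M by (rule levy(1))
  have [measurable]: "D t \<in> borel_measurable M" by (rule levy(2))
  show ?thesis
    using bounded subordinator_nonneg[OF D \<open>0 \<le> t\<close>] by (intro integrable_const_bound[where B = B]) auto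
qed

lemma subordinator_integral_exp_bounds:
  fixes q :: "real \<Rightarrow> real"
  assumes D: "subordinator M D \<nu>" and "0 \<le> l" "0 \<le> t"
    and [measurable]: "q \<in> borel_measurable borel"
    and lower: "\<And>s. 0 \<le> s \<Longrightarrow> c * exp (- l * s) \<le> q s"
    and upper: "\<And>s. 0 \<le> s \<Longrightarrow> q s \<le> C * exp (- l * s)"
  shows "c * exp (- t * laplace_exponent \<nu> l) \<le> (\<integral>\<omega>. q (D t \<omega>) \<partial>M)"
    and "(\<integral>\<omega>. q (D t \<omega>) \<partial>M) \<le> C * exp (- t * laplace_exponent \<nu> l)"
proof -
  have laplace: "(\<integral>\<omega>. exp (- l * D t \<omega>) \<partial>M) = exp (- t * laplace_exponent \<nu> l)"
    using D \<open>0 \<le> l\<close> \<open>0 \<le> t\<close> unfolding subordinator_def by simp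
  have D_nonneg: "\<And>\<omega>. \<omega> \<in> space M \<Longrightarrow> 0 \<le> D t \<omega>" by (rule subordinator_nonneg[OF D \<open>0 \<le> t\<close>])
  have exp_le_1: "exp (- l * s) \<le> 1" if "0 \<le> s" for s
    using that \<open>0 \<le> l\<close> by simp
  have int_exp: "integrable M (\<lambda>\<omega>. exp (- l * D t \<omega>))"
    using exp_le_1 by (intro integrable_comp_subordinator[OF D \<open>0 \<le> t\<close>, where B = 1]) auto
  have "\<bar>q s\<bar> \<le> \<bar>c\<bar> + \<bar>C\<bar>" if "0 \<le> s" for s
  proof -
    have "\<bar>c * exp (- l * s)\<bar> \<le> \<bar>c\<bar>" "\<bar>C * exp (- l * s)\<bar> \<le> \<bar>C\<bar>"
      using exp_le_1[OF that] by (simp_all add: abs_mult mult_left_le)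
    then show ?thesis using lower[OF that] upper[OF that] by simp
  qed
  then have int_q: "integrable M (\<lambda>\<omega>. q (D t \<omega>))"
    by (intro integrable_comp_subordinator[OF D \<open>0 \<le> t\<close>]) auto
  have "c * exp (- t * laplace_exponent \<nu> l) = (\<integral>\<omega>. c * exp (- l * D t \<omega>) \<partial>M)"
    using laplace by simp
  also have "\<dots> \<le> (\<integral>\<omega>. q (D t \<omega>) \<partial>M)"
    using int_exp int_q lower D_nonneg by (intro integral_mono) auto
  finally show "c * exp (- t * laplace_exponent \<nu> l) \<le> (\<integral>\<omega>. q (D t \<omega>) \<partial>M)" .
  have "(\<integral>\<omega>. q (D t \<omega>) \<partial>M) \<le> (\<integral>\<omega>. C * exp (- l * D t \<omega>) \<partial>M)"
    using int_exp int_q upper D_nonneg by (intro integral_mono) auto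
  also have "\<dots> = C * exp (- t * laplace_exponent \<nu> l)" using laplace by simp
  finally show "(\<integral>\<omega>. q (D t \<omega>) \<partial>M) \<le> C * exp (- t * laplace_exponent \<nu> l)" .
qed

lemma exit_time_pos:
  assumes "cadlag_path f" "open \<Omega>" "f 0 \<in> \<Omega>"
  shows "0 < exit_time \<Omega> f"
proof -
  have "(f \<longlongrightarrow> f 0) (at_right 0)"
    using assms(1) unfolding cadlag_path_def continuous_within by auto
  then have "eventually (\<lambda>s. f s \<in> \<Omega>) (at_right 0)"
    using assms(2,3) by (rule topological_tendstoD)
  then obtain b where "0 < b" and b: "\<And>s. 0 < s \<Longrightarrow> s < b \<Longrightarrow> f s \<in> \<Omega>"
    unfolding eventually_at_right_field by auto
  have "ereal b \<le> exit_time \<Omega> f"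
    unfolding exit_time_def
  proof (rule Inf_greatest)
    fix z assume "z \<in> ereal ` {t. 0 < t \<and> f t \<notin> \<Omega>}"
    then obtain t where "z = ereal t" "0 < t" "f t \<notin> \<Omega>" by auto
    then show "ereal b \<le> z" using b by (cases "t < b") auto
  qed
  then show ?thesis using \<open>0 < b\<close> less_le_trans[of 0 "ereal b" "exit_time \<Omega> f"] by simp
qed

lemma exit_time_le:
  assumes "0 < s" "f s \<notin> \<Omega>"
  shows "exit_time \<Omega> f \<le> ereal s"
  unfolding exit_time_def by (rule Inf_lower) (use assms in auto)

lemma cadlag_path_add_const:
  fixes f :: "real \<Rightarrow> 'b::topological_monoid_add"
  assumes "cadlag_path f"
  shows "cadlag_path (\<lambda>s. x + f s)"
  unfolding cadlag_path_def
proof (intro conjI allI impI)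
  fix t :: real
  assume "0 \<le> t"
  then show "continuous (at_right t) (\<lambda>s. x + f s)"
    using assms unfolding cadlag_path_def by (intro continuous_add continuous_const) auto
next
  fix t :: real
  assume "0 < t"
  then obtain l where "(f \<longlongrightarrow> l) (at_left t)" using assms unfolding cadlag_path_def by blast
  then show "\<exists>l. ((\<lambda>s. x + f s) \<longlongrightarrow> l) (at_left t)" using tendsto_add[OF tendsto_const] by blast
qed

lemma survival_prob_0:
  assumes "levy_process M Y" "open \<Omega>" "x \<in> \<Omega>"
  shows "survival_prob M Y \<Omega> x 0 = 1"
proof -
  have "0 < exit_time \<Omega> (\<lambda>s. x + Y s \<omega>)" if "\<omega> \<in> space M" for \<omega>
  proof (rule exit_time_pos)
    show "cadlag_path (\<lambda>s. x + Y s \<omega>)"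
      using levy_processD(4)[OF assms(1) that] by (rule cadlag_path_add_const)
    show "x + Y 0 \<omega> \<in> \<Omega>" using levy_processD(3)[OF assms(1) that] assms(3) by simp
  qed fact
  then have "{\<omega>\<in>space M. ereal 0 < exit_time \<Omega> (\<lambda>s. x + Y s \<omega>)} = space M"
    by (auto simp: zero_ereal_def)
  then show ?thesis
    unfolding survival_prob_def by (simp add: prob_space.prob_space[OF levy_processD(1)[OF assms(1)]])
qed

lemma spectral_heat_content_0:
  assumes "levy_process M Y" "open \<Omega>" "bounded \<Omega>"
  shows "spectral_heat_content M Y \<Omega> 0 = measure lborel \<Omega>"
proof -
  have "spectral_heat_content M Y \<Omega> 0 = (\<integral>x\<in>\<Omega>. 1 \<partial>lborel)"
    unfolding spectral_heat_content_def
    by (rule set_lebesgue_integral_cong) (use assms survival_prob_0 in auto)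
  also have "\<dots> = measure lborel \<Omega>"
    using assms emeasure_bounded_finite[of \<Omega>] by (subst set_integral_const) auto
  finally show ?thesis .
qed

section \<open>Spectral heat content of the killed process\<close>

locale killed_eigensystem =
  fixes M :: "'a measure" and Y :: "real \<Rightarrow> 'a \<Rightarrow> 'b::euclidean_space" and \<Omega> :: "'b set"
    and lam :: "nat \<Rightarrow> real" and \<psi> :: "nat \<Rightarrow> 'b \<Rightarrow> real"
  assumes open_domain: "open \<Omega>" and bounded_domain: "bounded \<Omega>"
    and eigenpairs: "killed_eigenpairs M Y \<Omega> lam \<psi>"
begin

lemma eigenpairsD:
  shows eigenfunction_measurable: "1 \<le> n \<Longrightarrow> \<psi> n \<in> borel_measurable borel"
    and eigenfunction_square_integrable: "1 \<le> n \<Longrightarrow> set_integrable lborel \<Omega> (\<lambda>x. (\<psi> n x)\<^sup>2)"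
    and eigenfunction_orthonormal: "1 \<le> n \<Longrightarrow> 1 \<le> m \<Longrightarrow>
      (\<integral>x\<in>\<Omega>. \<psi> n x * \<psi> m x \<partial>lborel) = (if n = m then 1 else 0)"
    and lam_1_pos: "0 < lam 1" and lam_1_less_lam_2: "lam 1 < lam 2"
    and lam_mono: "2 \<le> n \<Longrightarrow> lam n \<le> lam (Suc n)"
    and killed_kernel_summable: "0 < s \<Longrightarrow> x \<in> \<Omega> \<Longrightarrow> y \<in> \<Omega> \<Longrightarrow>
      summable (\<lambda>n. exp (- lam (Suc n) * s) * \<psi> (Suc n) x * \<psi> (Suc n) y)"
    and killed_transition_density: "0 < s \<Longrightarrow> x \<in> \<Omega> \<Longrightarrow> A \<in> sets borel \<Longrightarrow> A \<subseteq> \<Omega> \<Longrightarrow>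
      measure M {\<omega>\<in>space M. ereal s < exit_time \<Omega> (\<lambda>t. x + Y t \<omega>) \<and> x + Y s \<omega> \<in> A}
      = (\<integral>y\<in>A. (\<Sum>n. exp (- lam (Suc n) * s) * \<psi> (Suc n) x * \<psi> (Suc n) y) \<partial>lborel)"
  using eigenpairs unfolding killed_eigenpairs_def by blast+

lemma measurable_eigenfunction_Suc [measurable]: "\<psi> (Suc n) \<in> borel_measurable borel"
  by (rule eigenfunction_measurable) simp

abbreviation dom_measure :: "'b measure" where
  "dom_measure \<equiv> restrict_space lborel \<Omega>"

lemma sets_domain [measurable]: "\<Omega> \<in> sets borel"
  using open_domain by simp

lemma space_dom_measure [simp]: "space dom_measure = \<Omega>"
  by (simp add: space_restrict_space)

lemma integrable_dom_measure_iff: "integrable dom_measure f \<longleftrightarrow> set_integrable lborel \<Omega> f"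
  for f :: "'b \<Rightarrow> real"
  by (simp add: integrable_restrict_space set_integrable_def)

lemma integral_dom_measure: "(\<integral>x. f x \<partial>dom_measure) = (\<integral>x\<in>\<Omega>. f x \<partial>lborel)"
  for f :: "'b \<Rightarrow> real"
  by (simp add: integral_restrict_space set_lebesgue_integral_def)

lemma finite_measure_dom_measure: "finite_measure dom_measure"
  using emeasure_bounded_finite[OF bounded_domain]
  by (intro finite_measureI) (simp add: emeasure_restrict_space)

lemma square_integrable_one: "integrable dom_measure (\<lambda>x. (1::real)\<^sup>2)"
  using finite_measure.integrable_const[OF finite_measure_dom_measure] by simp

lemma measure_dom_measure: "measure dom_measure \<Omega> = measure lborel \<Omega>"
  by (simp add: measure_restrict_space)

(* Indices are shifted: the n-th function of the system is psi (n + 1), with eigenvalue lam (n + 1). *)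
sublocale orthonormal_system dom_measure "\<lambda>n. \<psi> (Suc n)"
proof
  show "(\<lambda>x. \<psi> (Suc n) x) \<in> borel_measurable dom_measure" for n
    by (intro measurable_restrict_space1) simp
  show "integrable dom_measure (\<lambda>x. (\<psi> (Suc n) x)\<^sup>2)" for n
    unfolding integrable_dom_measure_iff by (rule eigenfunction_square_integrable) simp
  show "(\<integral>x. \<psi> (Suc n) x * \<psi> (Suc m) x \<partial>dom_measure) = (if n = m then 1 else 0)" for n m
    unfolding integral_dom_measure using eigenfunction_orthonormal[of "Suc n" "Suc m"] by simp
qed

lemma lam_2_le: "2 \<le> n \<Longrightarrow> lam 2 \<le> lam n"
proof (induction n rule: dec_induct)
  case (step n)
  then show ?case using lam_mono[of n] by simp
qed simp

lemma lam_1_le: "1 \<le> n \<Longrightarrow> lam 1 \<le> lam n"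
  using lam_1_less_lam_2 lam_2_le[of n] by (cases "n = 1") auto

definition killed_kernel :: "real \<Rightarrow> 'b \<Rightarrow> 'b \<Rightarrow> real" where
  "killed_kernel s x y = (\<Sum>n. exp (- lam (Suc n) * s) * \<psi> (Suc n) x * \<psi> (Suc n) y)"

lemma killed_kernel_expansion:
  assumes "0 < s" "x \<in> \<Omega>" "y \<in> \<Omega>"
  shows "(\<lambda>n. exp (- lam (Suc n) * s) * \<psi> (Suc n) x * \<psi> (Suc n) y) sums killed_kernel s x y"
  unfolding killed_kernel_def using assms by (intro summable_sums killed_kernel_summable)

lemma killed_kernel_square_summable:
  assumes "0 < s" "x \<in> \<Omega>"
  shows "summable (\<lambda>n. (exp (- lam (Suc n) * s) * \<psi> (Suc n) x)\<^sup>2)"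
proof -
  have "summable (\<lambda>n. exp (- lam (Suc n) * (2 * s)) * \<psi> (Suc n) x * \<psi> (Suc n) x)"
    using assms by (intro killed_kernel_summable) auto
  moreover have "exp (- lam (Suc n) * (2 * s)) = (exp (- lam (Suc n) * s))\<^sup>2" for n
    by (simp add: power2_eq_square exp_add[symmetric])
  ultimately show ?thesis by (simp add: power_mult_distrib power2_eq_square mult_ac)
qed

lemma survival_prob_eq_integral_kernel:
  assumes "0 < s" "x \<in> \<Omega>"
  shows "survival_prob M Y \<Omega> x s = (\<integral>y. killed_kernel s x y \<partial>dom_measure)"
proof -
  have "survival_prob M Y \<Omega> x s
      = measure M {\<omega>\<in>space M. ereal s < exit_time \<Omega> (\<lambda>t. x + Y t \<omega>) \<and> x + Y s \<omega> \<in> \<Omega>}"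
    unfolding survival_prob_def
    using exit_time_le[OF \<open>0 < s\<close>, of "\<lambda>t. x + Y t _" \<Omega>] by (metis not_le)
  also have "\<dots> = (\<integral>y\<in>\<Omega>. killed_kernel s x y \<partial>lborel)"
    using assms unfolding killed_kernel_def by (intro killed_transition_density) auto
  finally show ?thesis by (simp add: integral_dom_measure)
qed

lemma measurable_killed_kernel [measurable]: "killed_kernel s x \<in> borel_measurable borel"
  unfolding killed_kernel_def by measurable

lemma killed_kernel_integrable:
  assumes "0 < s" "x \<in> \<Omega>"
  shows "set_integrable lborel \<Omega> (killed_kernel s x)"
proof -
  have "integrable dom_measure (\<lambda>y. (killed_kernel s x y)\<^sup>2)"
    using square_integrable_expansion[of "\<lambda>n. exp (- lam (Suc n) * s) * \<psi> (Suc n) x"]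
      killed_kernel_square_summable[OF assms] killed_kernel_expansion[OF assms]
    by simp
  moreover have "killed_kernel s x \<in> borel_measurable dom_measure"
    by (intro measurable_restrict_space1) simp
  ultimately have "integrable dom_measure (killed_kernel s x)"
    using finite_measure.square_integrable_imp_integrable[OF finite_measure_dom_measure] by blast
  then show ?thesis by (simp add: integrable_dom_measure_iff)
qed

lemma killed_kernel_nonneg:
  assumes "0 < s" "x \<in> \<Omega>"
  shows "AE y in dom_measure. 0 \<le> killed_kernel s x y"
proof -
  define A where "A = {y \<in> \<Omega>. killed_kernel s x y < 0}"
  have [measurable]: "A \<in> sets borel" unfolding A_def by measurable
  have "A \<subseteq> \<Omega>" unfolding A_def by auto
  define f where "f y = - indicator A y * killed_kernel s x y" for y
  have f_nonneg: "0 \<le> f y" for y by (auto simp: f_def A_def indicator_def)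
  have "integrable lborel f"
    using set_integrable_subset[OF killed_kernel_integrable[OF assms] _ \<open>A \<subseteq> \<Omega>\<close>]
    unfolding f_def set_integrable_def by simp
  moreover have "integral\<^sup>L lborel f \<le> 0"
  proof -
    have "0 \<le> measure M {\<omega>\<in>space M. ereal s < exit_time \<Omega> (\<lambda>t. x + Y t \<omega>) \<and> x + Y s \<omega> \<in> A}"
      by simp
    also have "\<dots> = (\<integral>y\<in>A. killed_kernel s x y \<partial>lborel)"
      using assms \<open>A \<subseteq> \<Omega>\<close> unfolding killed_kernel_def by (intro killed_transition_density) auto
    finally show ?thesis unfolding f_def set_lebesgue_integral_def by simp
  qed
  ultimately have "AE y in lborel. f y = 0"
    using integral_nonneg_eq_0_iff_AE[of lborel f] f_nonneg
    by (simp add: order_antisym integral_nonneg)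
  then have "AE y in lborel. y \<in> \<Omega> \<longrightarrow> 0 \<le> killed_kernel s x y"
    by eventually_elim (auto simp: f_def A_def indicator_def split: if_splits)
  then show ?thesis by (subst AE_restrict_space_iff) auto
qed

lemma ground_state_mass_nonzero: "(\<integral>x. \<psi> 1 x \<partial>dom_measure) \<noteq> 0"
proof -
  interpret ground: positive_kernel dom_measure "\<lambda>n. \<psi> (Suc n)" "\<lambda>n. exp (- lam (Suc n))"
    "killed_kernel 1"
  proof
    show "0 \<le> exp (- lam (Suc n))" for n by simp
    show "exp (- lam (Suc 1)) < exp (- lam (Suc 0))"
      using lam_1_less_lam_2 by (simp add: numeral_2_eq_2)
    show "exp (- lam (Suc n)) \<le> exp (- lam (Suc 1))" if "1 \<le> n" for n
      using lam_2_le[of "Suc n"] that by (simp add: numeral_2_eq_2)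
    show "summable (\<lambda>n. (exp (- lam (Suc n)) * \<psi> (Suc n) x)\<^sup>2)" if "x \<in> space dom_measure" for x
      using killed_kernel_square_summable[of 1 x] that by simp
    show "(\<lambda>n. exp (- lam (Suc n)) * \<psi> (Suc n) x * \<psi> (Suc n) y) sums killed_kernel 1 x y"
      if "x \<in> space dom_measure" "y \<in> space dom_measure" for x y
      using killed_kernel_expansion[of 1 x y] that by simp
    show "AE y in dom_measure. 0 \<le> killed_kernel 1 x y" if "x \<in> space dom_measure" for x
      using killed_kernel_nonneg[of 1 x] that by simp
  qed
  show ?thesis using ground.ground_state_integral_nonzero[OF finite_measure_dom_measure] by simp
qed

lemma mass_square_summable: "summable (\<lambda>n. (\<integral>x. \<psi> (Suc n) x \<partial>dom_measure)\<^sup>2)"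
  and suminf_mass_square_le: "(\<Sum>n. (\<integral>x. \<psi> (Suc n) x \<partial>dom_measure)\<^sup>2) \<le> measure lborel \<Omega>"
proof -
  note bessel = bessel_inequality[OF borel_measurable_const square_integrable_one]
  show "summable (\<lambda>n. (\<integral>x. \<psi> (Suc n) x \<partial>dom_measure)\<^sup>2)" using bessel(1) by simp
  show "(\<Sum>n. (\<integral>x. \<psi> (Suc n) x \<partial>dom_measure)\<^sup>2) \<le> measure lborel \<Omega>"
    using bessel(2) measure_dom_measure by simp
qed

lemma survival_prob_expansion:
  assumes "0 < s" "x \<in> \<Omega>"
  shows "(\<lambda>n. (exp (- lam (Suc n) * s) * (\<integral>y. \<psi> (Suc n) y \<partial>dom_measure)) * \<psi> (Suc n) x)
    sums survival_prob M Y \<Omega> x s"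
  using expansion_inner_sums[OF killed_kernel_square_summable[OF assms] _ borel_measurable_const
      square_integrable_one]
    killed_kernel_expansion[OF assms] survival_prob_eq_integral_kernel[OF assms]
  by (simp add: ac_simps)

lemma spectral_heat_content_sums:
  assumes "0 < s"
  shows "(\<lambda>n. exp (- lam (Suc n) * s) * (\<integral>x. \<psi> (Suc n) x \<partial>dom_measure)\<^sup>2)
    sums spectral_heat_content M Y \<Omega> s"
proof -
  have "summable (\<lambda>n. (exp (- lam (Suc n) * s) * (\<integral>x. \<psi> (Suc n) x \<partial>dom_measure))\<^sup>2)"
  proof (rule summable_comparison_test'[OF mass_square_summable, where N = 0])
    fix n
    have "exp (- lam (Suc n) * s) \<le> 1"
      using lam_1_pos lam_1_le[of "Suc n"] \<open>0 < s\<close> by simp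
    then show "norm ((exp (- lam (Suc n) * s) * (\<integral>x. \<psi> (Suc n) x \<partial>dom_measure))\<^sup>2)
        \<le> (\<integral>x. \<psi> (Suc n) x \<partial>dom_measure)\<^sup>2"
      by (simp add: power_mult_distrib mult_left_le_one_le power_le_one)
  qed
  then have "(\<lambda>n. exp (- lam (Suc n) * s) * (\<integral>x. \<psi> (Suc n) x \<partial>dom_measure)
      * (\<integral>x. \<psi> (Suc n) x * 1 \<partial>dom_measure))
    sums (\<integral>x. survival_prob M Y \<Omega> x s * 1 \<partial>dom_measure)"
    using survival_prob_expansion[OF assms] square_integrable_one by (intro expansion_inner_sums) auto
  then show ?thesis
    unfolding spectral_heat_content_def by (simp add: integral_dom_measure power2_eq_square mult_ac)
qed

lemma spectral_heat_content_bounds: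
  assumes "0 < s"
  shows "(\<integral>x. \<psi> 1 x \<partial>dom_measure)\<^sup>2 * exp (- lam 1 * s) \<le> spectral_heat_content M Y \<Omega> s"
    and "spectral_heat_content M Y \<Omega> s \<le> measure lborel \<Omega> * exp (- lam 1 * s)"
proof -
  let ?a = "\<lambda>n. (\<integral>x. \<psi> (Suc n) x \<partial>dom_measure)\<^sup>2"
  note Q = spectral_heat_content_sums[OF assms]
  show "(\<integral>x. \<psi> 1 x \<partial>dom_measure)\<^sup>2 * exp (- lam 1 * s) \<le> spectral_heat_content M Y \<Omega> s"
    using sum_le_suminf[OF sums_summable[OF Q], of "{0}"] sums_unique[OF Q] by (simp add: mult.commute)
  have "spectral_heat_content M Y \<Omega> s \<le> (\<Sum>n. exp (- lam 1 * s) * ?a n)"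
  proof (rule sums_le[OF _ Q summable_sums[OF summable_mult[OF mass_square_summable]]])
    show "exp (- lam (Suc n) * s) * ?a n \<le> exp (- lam 1 * s) * ?a n" for n
      using lam_1_le[of "Suc n"] assms by (intro mult_right_mono) auto
  qed
  also have "\<dots> \<le> exp (- lam 1 * s) * measure lborel \<Omega>"
    using suminf_mass_square_le by (simp add: suminf_mult[OF mass_square_summable])
  finally show "spectral_heat_content M Y \<Omega> s \<le> measure lborel \<Omega> * exp (- lam 1 * s)"
    by (simp add: mult.commute)
qed

(* Q is not known to be measurable in s; q is a Borel version of it on [0, infinity). *)
lemma spectral_heat_content_exp_bounds:
  assumes "levy_process M Y"
  obtains q where "q \<in> borel_measurable borel"
    and "\<And>s. 0 \<le> s \<Longrightarrow> spectral_heat_content M Y \<Omega> s = q s"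
    and "\<And>s. 0 \<le> s \<Longrightarrow> (\<integral>x. \<psi> 1 x \<partial>dom_measure)\<^sup>2 * exp (- lam 1 * s) \<le> q s"
    and "\<And>s. 0 \<le> s \<Longrightarrow> q s \<le> measure lborel \<Omega> * exp (- lam 1 * s)"
proof
  let ?q = "\<lambda>s. if 0 < s then \<Sum>n. exp (- lam (Suc n) * s) * (\<integral>x. \<psi> (Suc n) x \<partial>dom_measure)\<^sup>2
    else measure lborel \<Omega>"
  show "?q \<in> borel_measurable borel" by measurable
  show eq: "spectral_heat_content M Y \<Omega> s = ?q s" if "0 \<le> s" for s
    using that sums_unique[OF spectral_heat_content_sums, of s]
      spectral_heat_content_0[OF assms open_domain bounded_domain]
    by (cases "s = 0") auto
  show "(\<integral>x. \<psi> 1 x \<partial>dom_measure)\<^sup>2 * exp (- lam 1 * s) \<le> ?q s" if "0 \<le> s" for s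
    using spectral_heat_content_bounds(1)[of s] eq[OF that] that
      sum_le_suminf[OF mass_square_summable, of "{0}"] suminf_mass_square_le
    by (cases "s = 0") auto
  show "?q s \<le> measure lborel \<Omega> * exp (- lam 1 * s)" if "0 \<le> s" for s
    using spectral_heat_content_bounds(2)[of s] eq[OF that] that by (cases "s = 0") auto
qed

end

section \<open>Subordination\<close>

lemma ln_asymp_equiv_of_exp_bounds:
  fixes Q :: "real \<Rightarrow> real"
  assumes "0 < \<phi>" "0 < c"
    and bounds: "eventually (\<lambda>t. c * exp (- t * \<phi>) \<le> Q t \<and> Q t \<le> C * exp (- t * \<phi>)) at_top"
  shows "(\<lambda>t. ln (Q t)) \<sim>[at_top] (\<lambda>t. - t * \<phi>)"
proof (rule asymp_equiv_sandwich_real)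
  have shift: "(\<lambda>t. a + - t * \<phi>) \<sim>[at_top] (\<lambda>t. - t * \<phi>)" for a :: real
  proof (subst asymp_equiv_add_left)
    have "((\<lambda>t. a / t) \<longlongrightarrow> 0) at_top"
      by (rule tendsto_divide_0[OF tendsto_const filterlim_at_top_imp_at_infinity[OF filterlim_ident]])
    then have "(\<lambda>_. a) \<in> o[at_top](\<lambda>t. t)"
      by (intro smalloI_tendsto) auto
    then show "(\<lambda>_. a) \<in> o[at_top](\<lambda>t. - t * \<phi>)"
      using \<open>0 < \<phi>\<close> by simp
  qed simp
  show "(\<lambda>t. ln c - t * \<phi>) \<sim>[at_top] (\<lambda>t. - t * \<phi>)" "(\<lambda>t. ln C - t * \<phi>) \<sim>[at_top] (\<lambda>t. - t * \<phi>)"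
    using shift by simp_all
  show "\<forall>\<^sub>F t in at_top. ln (Q t) \<in> {ln c - t * \<phi>..ln C - t * \<phi>}"
    using bounds
  proof eventually_elim
    case (elim t)
    have "0 < c * exp (- t * \<phi>)" using \<open>0 < c\<close> by simp
    then have "0 < Q t" using elim by linarith
    moreover from this have "0 < C * exp (- t * \<phi>)" using elim by linarith
    then have "0 < C" by (simp add: zero_less_mult_iff)
    ultimately show ?case using elim \<open>0 < c\<close>
      by (auto simp: ln_mult ln_le_cancel_iff[symmetric] simp del: ln_le_cancel_iff)
  qed
qed

context killed_eigensystem
begin

lemma subordinate_heat_content_exp_bounds:
  assumes "levy_process M Y" and D: "subordinator M D \<nu>" and "0 \<le> t"
  shows "(\<integral>x. \<psi> 1 x \<partial>dom_measure)\<^sup>2 * exp (- t * laplace_exponent \<nu> (lam 1))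
      \<le> subordinate_heat_content M Y D \<Omega> t"
    and "subordinate_heat_content M Y D \<Omega> t \<le> measure lborel \<Omega> * exp (- t * laplace_exponent \<nu> (lam 1))"
proof -
  obtain q where q_measurable: "q \<in> borel_measurable borel"
    and Q_eq: "\<And>s. 0 \<le> s \<Longrightarrow> spectral_heat_content M Y \<Omega> s = q s"
    and q_bounds: "\<And>s. 0 \<le> s \<Longrightarrow> (\<integral>x. \<psi> 1 x \<partial>dom_measure)\<^sup>2 * exp (- lam 1 * s) \<le> q s"
      "\<And>s. 0 \<le> s \<Longrightarrow> q s \<le> measure lborel \<Omega> * exp (- lam 1 * s)"
    using spectral_heat_content_exp_bounds[OF \<open>levy_process M Y\<close>] by blast
  note bounds = subordinator_integral_exp_bounds[OF D less_imp_le[OF lam_1_pos] \<open>0 \<le> t\<close> q_measurable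
      q_bounds]
  have "subordinate_heat_content M Y D \<Omega> t = (\<integral>\<omega>. q (D t \<omega>) \<partial>M)"
    unfolding subordinate_heat_content_def using subordinator_nonneg[OF D \<open>0 \<le> t\<close>] Q_eq
    by (intro Bochner_Integration.integral_cong) auto
  with bounds show "(\<integral>x. \<psi> 1 x \<partial>dom_measure)\<^sup>2 * exp (- t * laplace_exponent \<nu> (lam 1))
      \<le> subordinate_heat_content M Y D \<Omega> t"
    and "subordinate_heat_content M Y D \<Omega> t \<le> measure lborel \<Omega> * exp (- t * laplace_exponent \<nu> (lam 1))"
    by simp_all
qed

end

theorem proposition3p3:
  fixes M :: "'a measure"
    and Y :: "real \<Rightarrow> 'a \<Rightarrow> real ^ 'd"
    and D :: "real \<Rightarrow> 'a \<Rightarrow> real"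
    and \<nu> :: "real measure"
    and \<Omega> :: "(real ^ 'd) set"
    and \<alpha> :: real
    and lam :: "nat \<Rightarrow> real"
    and \<psi> :: "nat \<Rightarrow> real ^ 'd \<Rightarrow> real"
  assumes "0 < \<alpha>" and "\<alpha> \<le> 2"
    and "isotropic_stable M \<alpha> Y"
    and "open \<Omega>" and "bounded \<Omega>"
    and "killed_eigenpairs M Y \<Omega> lam \<psi>"
    and "subordinator M D \<nu>"
    and "prob_space.indep_set M (process_sigma M Y) (process_sigma M D)"
  shows "(\<lambda>t. ln (subordinate_heat_content M Y D \<Omega> t))
           \<sim>[at_top] (\<lambda>t. - t * laplace_exponent \<nu> (lam 1))"
proof -
  (* The value of alpha and the independence of Y and D are not needed: Q^{Y o D} is defined
     directly as E[Q^Y(D_t)]. *)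
  interpret killed_eigensystem M Y \<Omega> lam \<psi> by unfold_locales fact+
  have "levy_process M Y" using \<open>isotropic_stable M \<alpha> Y\<close> unfolding isotropic_stable_def by blast
  note bounds = subordinate_heat_content_exp_bounds[OF this \<open>subordinator M D \<nu>\<close>]
  show ?thesis
  proof (rule ln_asymp_equiv_of_exp_bounds)
    show "0 < laplace_exponent \<nu> (lam 1)"
      using \<open>subordinator M D \<nu>\<close> lam_1_pos unfolding subordinator_def by (blast intro: laplace_exponent_pos)
    show "0 < (\<integral>x. \<psi> 1 x \<partial>dom_measure)\<^sup>2" using ground_state_mass_nonzero by simp
    show "\<forall>\<^sub>F t in at_top. (\<integral>x. \<psi> 1 x \<partial>dom_measure)\<^sup>2 * exp (- t * laplace_exponent \<nu> (lam 1))
        \<le> subordinate_heat_content M Y D \<Omega> t \<and>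
        subordinate_heat_content M Y D \<Omega> t \<le> measure lborel \<Omega> * exp (- t * laplace_exponent \<nu> (lam 1))"
      using eventually_ge_at_top[of 0] by eventually_elim (use bounds in auto)
  qed
qed

end
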